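(* Let $n\geqslant 1$. Every partition $\lambda\subset\mathbb N^{3n-1}$ with embedding dimension $3n-1$ and socle type $(0,0,0,n)$ has Hilbert–Samuel function either $(1,3n-1,3n,n)$ or $(1,3n-1,3n-1,n)$. Moreover \[ \alpha^{3n-1}_{3n,n,3}=\frac{3(n-1)}{2}\cdot\frac{(3n)!}{6^n n!},\qquad \alpha^{3n-1}_{3n-1,n,3}=2\cdot\frac{(3n)!}{6^n n!}. \]
   Context: Let $\mathbb N=\mathbb Z_{\geqslant 0}$ with the componentwise order. A partition in $\mathbb N^k$ is a finite subset $\lambda\subset\mathbb N^k$ closed downward; $\mathrm P^k_d$ is the set of those of size $d$. The degree of a point is the sum of its coordinates; $\lambda_{=i}$, $\lambda_{\geqslant i}$ are the elements of degree $i$, resp. $\geqslant i$; the Hilbert–Samuel function is $h_\lambda(i)=|\lambda_{=i}|$, written as the tuple $(h_\lambda(0),\dots,h_\lambda(\ell))$ with $\ell=\ell(\lambda)$ the maximal degree (the length); $h_\lambda(1)$ is the embedding dimension. $\mathrm{Soc}(\lambda)$ is the set of maximal elements; socle type $(0,0,0,n)$ means all elements of $\mathrm{Soc}(\lambda)$ have degree $3$ and there are exactly $n$ of them. For positive integers $k,q,m$, an M-partition of type $(k,q,m)$ is $\lambda\in\mathrm P^k_{1+k+q+m}$ with $\mathrm{Soc}(\lambda)\subset\lambda_{\geqslant3}$, $h_\lambda(1)=k$, $h_\lambda(2)=q$, $\sum_{i\geqslant3}h_\lambda(i)=m$; $\alpha^k_{q,m,\ell}$ is the number of M-partitions of type $(k,q,m)$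 and length $\ell$. *)

theory Defs
  imports Complex_Main
begin

definition pts :: "nat \<Rightarrow> nat list set" where
  "pts k = {x. length x = k}"

definition le_pt :: "nat list \<Rightarrow> nat list \<Rightarrow> bool" where
  "le_pt x y \<longleftrightarrow> list_all2 (\<le>) x y"

definition is_partition :: "nat \<Rightarrow> nat list set \<Rightarrow> bool" where
  "is_partition k P \<longleftrightarrow> finite P \<and> P \<subseteq> pts k \<and>
     (\<forall>x\<in>P. \<forall>y\<in>pts k. le_pt y x \<longrightarrow> y \<in> P)"

definition deg :: "nat list \<Rightarrow> nat" where
  "deg x = sum_list x"

definition hilb :: "nat list set \<Rightarrow> nat \<Rightarrow> nat" where
  "hilb P i = card {x\<in>P. deg x = i}"

definition plength :: "nat list set \<Rightarrow> nat" where
  "plength P = Max (deg ` P)"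

definition socle :: "nat list set \<Rightarrow> nat list set" where
  "socle P = {x\<in>P. \<forall>y\<in>P. le_pt x y \<longrightarrow> y = x}"

definition socle_type_0003 :: "nat list set \<Rightarrow> nat \<Rightarrow> bool" where
  "socle_type_0003 P n \<longleftrightarrow> (\<forall>x\<in>socle P. deg x = 3) \<and> card (socle P) = n"

definition M_partition :: "nat \<Rightarrow> nat \<Rightarrow> nat \<Rightarrow> nat list set \<Rightarrow> bool" where
  "M_partition k q m P \<longleftrightarrow> is_partition k P \<and> card P = 1 + k + q + m \<and>
     socle P \<subseteq> {x\<in>P. deg x \<ge> 3} \<and> hilb P 1 = k \<and> hilb P 2 = q \<and>
     card {x\<in>P. deg x \<ge> 3} = m"

definition alpha :: "nat \<Rightarrow> nat \<Rightarrow> nat \<Rightarrow> nat \<Rightarrow> nat" where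
  "alpha k q m l = card {P. M_partition k q m P \<and> plength P = l}"

end

theory Submission
  imports Defs
begin

text \<open>
  A partition is the down-closure of its socle \<open>S\<close>; here \<open>S\<close> consists of \<open>n\<close> points of degree 3
  whose supports cover all \<open>k = 3n - 1\<close> coordinates. Below a point \<open>s\<close> of degree 3 lie exactly
  \<open>|supp s|\<close> points of degree 2, and for \<open>3n = k + 1\<close> these sets are disjoint for distinct socle
  points. Hence \<open>h(2)\<close> is the weight \<open>\<Sum>s\<in>S. |supp s|\<close>, which is at least \<open>k\<close> (the supports
  cover) and at most \<open>3n = k + 1\<close>. Weight \<open>k\<close> forces disjoint supports: one socle point is
  \<open>x\<^sub>a\<^sup>2 x\<^sub>b\<close> and the others are squarefree on the blocks of a partition of the remaining
  \<open>3n - 3\<close> coordinates into triples. Weight \<open>k + 1\<close> forces all socle points to be squarefree,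
  with exactly two supports meeting, in a single coordinate. Both families are counted through
  the number \<open>(3m)!/(6\<^sup>m m!)\<close> of partitions of a \<open>3m\<close>-set into triples.
\<close>

definition supp :: "nat list \<Rightarrow> nat set" where
  "supp x = {i. i < length x \<and> 0 < x!i}"

definition sqfree_pt :: "nat \<Rightarrow> nat set \<Rightarrow> nat list" where
  "sqfree_pt k B = map (\<lambda>i. if i \<in> B then 1 else 0) [0..<k]"

lemma le_pt_iff_nth: "le_pt x y \<longleftrightarrow> length x = length y \<and> (\<forall>i<length y. x!i \<le> y!i)"
  unfolding le_pt_def list_all2_conv_all_nth by auto

lemma le_pt_refl: "le_pt x x"
  by (simp add: le_pt_iff_nth)

lemma le_pt_trans: "le_pt x y \<Longrightarrow> le_pt y z \<Longrightarrow> le_pt x z"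
  by (auto simp: le_pt_iff_nth intro: order_trans)

lemma deg_eq_sum_nth: "deg x = (\<Sum>i<length x. x!i)"
  by (simp add: deg_def sum_list_sum_nth atLeast0LessThan)

lemma nth_le_deg: "i < length x \<Longrightarrow> x!i \<le> deg x"
  by (simp add: deg_def elem_le_sum_list)

lemma supp_subset_lessThan: "supp x \<subseteq> {..<length x}"
  by (auto simp: supp_def)

lemma finite_supp [simp]: "finite (supp x)"
  using supp_subset_lessThan finite_subset by blast

lemma deg_eq_sum_supp: "deg x = (\<Sum>i\<in>supp x. x!i)"
  unfolding deg_eq_sum_nth by (rule sum.mono_neutral_right) (auto simp: supp_def)

lemma card_supp_le_deg: "card (supp x) \<le> deg x"
proof -
  have "card (supp x) = (\<Sum>i\<in>supp x. 1)" by simp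
  also have "\<dots> \<le> (\<Sum>i\<in>supp x. x!i)" by (rule sum_mono) (auto simp: supp_def)
  finally show ?thesis by (simp add: deg_eq_sum_supp)
qed

lemma nth_le_1_if_card_supp_eq_deg:
  assumes "card (supp x) = deg x" "i < length x"
  shows "x!i \<le> 1"
proof (rule ccontr)
  assume "\<not> x!i \<le> 1"
  then have "i \<in> supp x" using assms(2) by (auto simp: supp_def)
  then have "(\<Sum>j\<in>supp x. 1) < (\<Sum>j\<in>supp x. x!j)"
    using \<open>\<not> x!i \<le> 1\<close> by (intro sum_strict_mono_ex1) (auto simp: supp_def)
  then show False using assms(1) by (simp add: deg_eq_sum_supp)
qed

lemma deg_eq_card_supp_if_nth_le_1:
  assumes "\<And>i. i < length x \<Longrightarrow> x!i \<le> 1"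
  shows "deg x = card (supp x)"
proof -
  have "deg x = (\<Sum>i\<in>supp x. 1)"
    unfolding deg_eq_sum_supp by (rule sum.cong) (auto simp: supp_def dest: assms)
  then show ?thesis by simp
qed

lemma le_pt_supp_mono: "le_pt y x \<Longrightarrow> supp y \<subseteq> supp x"
  by (auto simp: le_pt_iff_nth supp_def)

lemma le_pt_deg_mono: "le_pt y x \<Longrightarrow> deg y \<le> deg x"
  by (auto simp: le_pt_iff_nth deg_eq_sum_nth intro!: sum_mono)

lemma le_pt_deg_eq_imp_eq:
  assumes "le_pt y x" "deg y = deg x"
  shows "y = x"
proof (rule ccontr)
  assume "y \<noteq> x"
  have len: "length y = length x" and le: "\<forall>i<length x. y!i \<le> x!i"
    using assms(1) by (auto simp: le_pt_iff_nth)
  then obtain i where i: "i < length x" "y!i \<noteq> x!i" using \<open>y \<noteq> x\<close> nth_equalityI by metis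
  have "(\<Sum>j<length x. y!j) < (\<Sum>j<length x. x!j)"
    by (rule sum_strict_mono_ex1) (use le i in \<open>auto intro: le_neq_implies_less\<close>)
  then show False using assms(2) len by (simp add: deg_eq_sum_nth)
qed

lemma length_sqfree_pt [simp]: "length (sqfree_pt k B) = k"
  by (simp add: sqfree_pt_def)

lemma nth_sqfree_pt [simp]: "i < k \<Longrightarrow> sqfree_pt k B ! i = (if i \<in> B then 1 else 0)"
  by (simp add: sqfree_pt_def)

lemma supp_sqfree_pt [simp]: "supp (sqfree_pt k B) = B \<inter> {..<k}"
  by (auto simp: supp_def split: if_splits)

lemma deg_sqfree_pt: "B \<subseteq> {..<k} \<Longrightarrow> deg (sqfree_pt k B) = card B"
  using deg_eq_card_supp_if_nth_le_1[of "sqfree_pt k B"] by (simp add: Int_absorb2)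

lemma inj_on_sqfree_pt: "inj_on (sqfree_pt k) (Pow {..<k})"
  by (rule inj_onI) (metis PowD Int_absorb2 supp_sqfree_pt)

lemma sqfree_pt_supp:
  assumes "\<And>i. i < length x \<Longrightarrow> x!i \<le> 1"
  shows "sqfree_pt (length x) (supp x) = x"
proof (rule nth_equalityI)
  fix i assume "i < length (sqfree_pt (length x) (supp x))"
  then show "sqfree_pt (length x) (supp x) ! i = x ! i"
    using assms[of i] by (auto simp: supp_def)
qed simp

lemma sqfree_pt_supp_if_card_supp_eq_deg:
  "length s = k \<Longrightarrow> card (supp s) = deg s \<Longrightarrow> sqfree_pt k (supp s) = s"
  using sqfree_pt_supp nth_le_1_if_card_supp_eq_deg by metis

lemma eq_sqfree_pt_if_deg_le_1:
  assumes "deg x \<le> 1"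
  shows "x = sqfree_pt (length x) (supp x)" "deg x = card (supp x)"
proof -
  have "\<And>i. i < length x \<Longrightarrow> x!i \<le> 1" using assms nth_le_deg order_trans by blast
  then show "x = sqfree_pt (length x) (supp x)" "deg x = card (supp x)"
    using sqfree_pt_supp deg_eq_card_supp_if_nth_le_1 by metis+
qed

lemma deg_1_subset_units:
  assumes "P \<subseteq> pts k"
  shows "{x\<in>P. deg x = 1} \<subseteq> (\<lambda>i. sqfree_pt k {i}) ` {..<k}"
proof
  fix x assume x: "x \<in> {x\<in>P. deg x = 1}"
  then have len: "length x = k" using assms by (auto simp: pts_def)
  have "card (supp x) = 1" "x = sqfree_pt k (supp x)"
    using eq_sqfree_pt_if_deg_le_1[of x] x len by auto
  then obtain i where "supp x = {i}" "x = sqfree_pt k {i}" by (auto simp: card_Suc_eq)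
  then show "x \<in> (\<lambda>i. sqfree_pt k {i}) ` {..<k}"
    using supp_subset_lessThan[of x] len by auto
qed

lemma card_units: "card ((\<lambda>i. sqfree_pt k {i}) ` {..<k}) = k"
  using inj_on_sqfree_pt[of k] by (subst card_image) (auto simp: inj_on_def)

definition lower_layer :: "nat \<Rightarrow> nat list \<Rightarrow> nat \<Rightarrow> nat list set" where
  "lower_layer k x d = {y\<in>pts k. le_pt y x \<and> deg y = d}"

lemma finite_lower_layer: "finite (lower_layer k x d)"
proof -
  have "lower_layer k x d \<subseteq> {xs. set xs \<subseteq> {0..d} \<and> length xs = k}"
    by (auto simp: lower_layer_def pts_def in_set_conv_nth dest!: nth_le_deg)
  then show ?thesis by (rule finite_subset) (simp add: finite_lists_length_eq)
qed

lemma deg_eq_deg_add_sum_diff: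
  assumes "le_pt y x"
  shows "deg x = deg y + (\<Sum>j<length x. x!j - y!j)"
proof -
  have len: "length y = length x" and le: "\<forall>i<length x. y!i \<le> x!i"
    using assms by (auto simp: le_pt_iff_nth)
  have "(\<Sum>j<length x. x!j) = (\<Sum>j<length x. y!j + (x!j - y!j))"
    by (rule sum.cong) (use le in auto)
  then show ?thesis using len by (simp add: deg_eq_sum_nth sum.distrib)
qed

text \<open>The points of degree \<open>d\<close> below a point of degree \<open>d + 1\<close> are obtained by lowering
  one nonzero coordinate.\<close>

lemma card_lower_layer:
  assumes x: "length x = k" "deg x = d + 1"
  shows "card (lower_layer k x d) = card (supp x)"
proof -
  define lower where "lower i = x[i := x!i - 1]" for i
  have "bij_betw lower (supp x) (lower_layer k x d)"
  proof (rule bij_betwI')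
    fix i j assume "i \<in> supp x" "j \<in> supp x"
    show "(lower i = lower j) = (i = j)"
    proof
      assume "lower i = lower j"
      then have "lower i ! i = lower j ! i" by simp
      then show "i = j"
        using \<open>i \<in> supp x\<close> \<open>j \<in> supp x\<close> by (cases "i = j") (auto simp: lower_def supp_def)
    qed simp
  next
    fix i assume "i \<in> supp x"
    then have i: "i < length x" "0 < x!i" by (auto simp: supp_def)
    then have le: "le_pt (lower i) x"
      by (auto simp: le_pt_iff_nth lower_def nth_list_update)
    have "(\<Sum>j<length x. x!j - lower i!j) = (\<Sum>j<length x. if j = i then 1 else 0)"
      by (rule sum.cong) (use i in \<open>auto simp: lower_def nth_list_update\<close>)
    then have "deg (lower i) = d"
      using deg_eq_deg_add_sum_diff[OF le] i x by simp
    then show "lower i \<in> lower_layer k x d"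
      using le x by (simp add: lower_layer_def pts_def lower_def)
  next
    fix y assume "y \<in> lower_layer k x d"
    then have y: "le_pt y x" "deg y = d" "length y = k"
      by (auto simp: lower_layer_def pts_def)
    then have "(\<Sum>j<length x. x!j - y!j) = 1"
      using deg_eq_deg_add_sum_diff[OF y(1)] x by simp
    then obtain i where i: "i < length x" "x!i - y!i = 1" "\<forall>j<length x. j \<noteq> i \<longrightarrow> x!j - y!j = 0"
      using sum_eq_1_iff[of "{..<length x}" "\<lambda>j. x!j - y!j"] by auto
    have le: "\<forall>j<length x. y!j \<le> x!j" using y(1) by (auto simp: le_pt_iff_nth)
    have "y = lower i"
    proof (rule nth_equalityI)
      fix j assume "j < length y"
      then show "y ! j = lower i ! j" using i le y x
        by (cases "j = i") (auto simp: lower_def nth_list_update intro: order.antisym)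
    qed (use y x in \<open>simp add: lower_def\<close>)
    moreover have "i \<in> supp x" using i by (auto simp: supp_def)
    ultimately show "\<exists>i\<in>supp x. y = lower i" by blast
  qed
  then show ?thesis by (simp add: bij_betw_same_card)
qed

section \<open>Triple partitions and pairs of pairs\<close>

definition triple_partitions :: "'a set \<Rightarrow> 'a set set set" where
  "triple_partitions W = {Q. \<Union>Q = W \<and> (\<forall>B\<in>Q. card B = 3) \<and>
     (\<forall>B\<in>Q. \<forall>B'\<in>Q. B \<noteq> B' \<longrightarrow> B \<inter> B' = {})}"

fun triple_partition_count :: "nat \<Rightarrow> nat" where
  "triple_partition_count 0 = 1"
| "triple_partition_count (Suc 0) = 0"
| "triple_partition_count (Suc (Suc 0)) = 0"
| "triple_partition_count (Suc (Suc (Suc m))) = (Suc (Suc m) choose 2) * triple_partition_count m"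

lemma triple_partitionsD:
  assumes "Q \<in> triple_partitions W"
  shows "\<Union>Q = W" "B \<in> Q \<Longrightarrow> card B = 3" "B \<in> Q \<Longrightarrow> finite B"
    "B \<in> Q \<Longrightarrow> B' \<in> Q \<Longrightarrow> B \<noteq> B' \<Longrightarrow> B \<inter> B' = {}"
  using assms by (auto simp: triple_partitions_def intro: card_ge_0_finite)

lemma finite_triple_partitions: "finite W \<Longrightarrow> finite (triple_partitions W)"
  by (rule finite_subset[of _ "Pow (Pow W)"]) (auto simp: triple_partitions_def)

lemma card_eq_3_card_triple_partition:
  assumes Q: "Q \<in> triple_partitions W" and W: "finite W"
  shows "card W = 3 * card Q"
proof -
  note T = triple_partitionsD[OF Q]
  have "finite Q" using T(1) W by (metis finite_UnionD)
  have "card (\<Union>Q) = sum card Q"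
    by (rule card_Union_disjoint) (use T in \<open>auto simp: pairwise_def disjnt_def\<close>)
  then show ?thesis using T(1,2) by simp
qed

lemma bij_betw_triple_partitions_remove:
  assumes W: "finite W" "a \<in> W"
  shows "bij_betw (\<lambda>(P, Q). insert (insert a P) Q)
           (SIGMA P:{P. P \<subseteq> W - {a} \<and> card P = 2}. triple_partitions (W - insert a P))
           (triple_partitions W)"
proof (rule bij_betw_imageI)
  show "inj_on (\<lambda>(P, Q). insert (insert a P) Q)
           (SIGMA P:{P. P \<subseteq> W - {a} \<and> card P = 2}. triple_partitions (W - insert a P))"
  proof (rule inj_onI, clarify)
    fix P Q P' Q'
    assume h: "P \<subseteq> W - {a}" "Q \<in> triple_partitions (W - insert a P)"
      "P' \<subseteq> W - {a}" "Q' \<in> triple_partitions (W - insert a P')"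
      "insert (insert a P) Q = insert (insert a P') Q'"
    have "\<forall>B\<in>Q. a \<notin> B" "\<forall>B\<in>Q'. a \<notin> B" using h by (auto simp: triple_partitions_def)
    then have "insert a P = insert a P'" "insert a P \<notin> Q" "insert a P' \<notin> Q'"
      using h(5) by blast+
    then show "P = P' \<and> Q = Q'" using h(1,3,5) by (metis Diff_insert_absorb insert_ident subset_Diff_insert)
  qed
  show "(\<lambda>(P, Q). insert (insert a P) Q) `
          (SIGMA P:{P. P \<subseteq> W - {a} \<and> card P = 2}. triple_partitions (W - insert a P))
        = triple_partitions W"
  proof
    show "(\<lambda>(P, Q). insert (insert a P) Q) `
          (SIGMA P:{P. P \<subseteq> W - {a} \<and> card P = 2}. triple_partitions (W - insert a P))
        \<subseteq> triple_partitions W"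
    proof clarify
      fix P Q assume h: "P \<subseteq> W - {a}" "card P = 2" "Q \<in> triple_partitions (W - insert a P)"
      then have "card (insert a P) = 3" by (metis Diff_iff card_insert_disjoint card.infinite
            insertCI numeral_2_eq_2 numeral_3_eq_3 subsetD zero_neq_numeral)
      then show "insert (insert a P) Q \<in> triple_partitions W"
        using h W unfolding triple_partitions_def by auto
    qed
    show "triple_partitions W \<subseteq> (\<lambda>(P, Q). insert (insert a P) Q) `
          (SIGMA P:{P. P \<subseteq> W - {a} \<and> card P = 2}. triple_partitions (W - insert a P))"
    proof
      fix Q assume Q: "Q \<in> triple_partitions W"
      then obtain B where B: "B \<in> Q" "a \<in> B" using W by (auto simp: triple_partitions_def)
      have "B \<subseteq> W" "card B = 3" "finite B" using triple_partitionsD[OF Q] B by auto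
      then have P: "B - {a} \<subseteq> W - {a}" "card (B - {a}) = 2" using B by auto
      have "Q - {B} \<in> triple_partitions (W - B)"
        using Q B unfolding triple_partitions_def by blast
      moreover have "insert a (B - {a}) = B" using B by auto
      ultimately show "Q \<in> (\<lambda>(P, Q). insert (insert a P) Q) `
          (SIGMA P:{P. P \<subseteq> W - {a} \<and> card P = 2}. triple_partitions (W - insert a P))"
        using P B by (intro image_eqI[of _ _ "(B - {a}, Q - {B})"]) auto
    qed
  qed
qed

lemma card_triple_partitions: "finite W \<Longrightarrow> card (triple_partitions W) = triple_partition_count (card W)"
proof (induction "card W" arbitrary: W rule: less_induct)
  case less
  show ?case
  proof (cases "W = {}")
    case True
    have "triple_partitions ({} :: 'a set) = {{}}"
      by (auto simp: triple_partitions_def) (metis card.empty zero_neq_numeral)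
    then show ?thesis using True by simp
  next
    case False
    then obtain a where a: "a \<in> W" by auto
    define Ps where "Ps = {P. P \<subseteq> W - {a} \<and> card P = 2}"
    have "card (triple_partitions W) = card (SIGMA P:Ps. triple_partitions (W - insert a P))"
      using bij_betw_same_card[OF bij_betw_triple_partitions_remove[OF less.prems a]]
      by (simp add: Ps_def)
    also have "\<dots> = (\<Sum>P\<in>Ps. card (triple_partitions (W - insert a P)))"
      using less.prems finite_triple_partitions by (intro card_SigmaI) (auto simp: Ps_def)
    also have "\<dots> = (\<Sum>P\<in>Ps. triple_partition_count (card W - 3))"
    proof (rule sum.cong)
      fix P assume "P \<in> Ps"
      then have "finite P" "a \<notin> P" "insert a P \<subseteq> W" "card P = 2"
        using a by (auto simp: Ps_def card.infinite intro: ccontr)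
      then have "card (W - insert a P) = card W - 3"
        using less.prems by (simp add: card_Diff_subset)
      moreover have "card (W - insert a P) < card W"
        using less.prems a by (intro psubset_card_mono) auto
      ultimately
      show "card (triple_partitions (W - insert a P)) = triple_partition_count (card W - 3)"
        using less.hyps less.prems by simp
    qed simp
    also have "card Ps = (card W - 1) choose 2"
      unfolding Ps_def using n_subsets[of "W - {a}" 2] less.prems a by simp
    ultimately show ?thesis using less.prems False a
      by (cases "card W" rule: triple_partition_count.cases) (auto simp: card_gt_0_iff)
  qed
qed

lemma two_mult_choose_two: "2 * (n choose 2) = n * (n - 1)"
  by (induction n) (auto simp: choose_two)

lemma triple_partition_count_mult: "triple_partition_count (3 * m) * 6 ^ m * fact m = fact (3 * m)"
proof (induction m)
  case (Suc m)
  have e: "3 * Suc m = Suc (Suc (Suc (3 * m)))" by simp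
  have "triple_partition_count (3 * Suc m) * 6 ^ Suc m * fact (Suc m)
      = (2 * (Suc (Suc (3 * m)) choose 2)) * (3 * Suc m)
        * (triple_partition_count (3 * m) * 6 ^ m * fact m)"
    unfolding e by (simp add: algebra_simps)
  also have "\<dots> = fact (3 * Suc m)"
    unfolding Suc two_mult_choose_two e by (simp add: algebra_simps)
  finally show ?case .
qed simp

lemma real_triple_partition_count:
  "real (triple_partition_count (3 * m)) = fact (3 * m) / (6 ^ m * fact m)"
  using arg_cong[OF triple_partition_count_mult[of m], of real] by (simp add: field_simps)

lemma fact_3_ratio_Suc:
  "fact (3 * Suc m) / (6 ^ Suc m * fact (Suc m))
     = (3 * real m + 2) * (3 * real m + 1) / 2 * (fact (3 * m) / (6 ^ m * fact m) :: real)"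
proof -
  have "3 * Suc m = Suc (Suc (Suc (3 * m)))" by simp
  then have "fact (3 * Suc m) = (real m + 1) * (3 * (3 * real m + 2) * (3 * real m + 1) * fact (3 * m))"
    by (simp only: fact_Suc) (simp add: algebra_simps)
  moreover have "6 ^ Suc m * fact (Suc m) = (real m + 1) * (6 * (6 ^ m * fact m))"
    by (simp add: algebra_simps)
  ultimately have "fact (3 * Suc m) / (6 ^ Suc m * fact (Suc m))
      = 3 * (3 * real m + 2) * (3 * real m + 1) * fact (3 * m) / (6 * (6 ^ m * fact m))"
    by (simp only: mult_divide_mult_cancel_left_if) simp
  also have "\<dots> = (3 * real m + 2) * (3 * real m + 1) / 2 * (fact (3 * m) / (6 ^ m * fact m))"
    by (simp add: field_simps)
  finally show ?thesis .
qed

lemma card_UN_add_card_Int_le: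
  assumes "finite I" "i \<in> I" "j \<in> I" "i \<noteq> j" "\<And>x. x \<in> I \<Longrightarrow> finite (A x)"
  shows "card (\<Union>x\<in>I. A x) + card (A i \<inter> A j) \<le> (\<Sum>x\<in>I. card (A x))"
proof -
  define R where "R = I - {i, j}"
  have "(\<Union>x\<in>I. A x) = (A i \<union> A j) \<union> (\<Union>x\<in>R. A x)" using assms by (auto simp: R_def)
  then have "card (\<Union>x\<in>I. A x) \<le> card (A i \<union> A j) + (\<Sum>x\<in>R. card (A x))"
    using card_Un_le card_UN_le[of R A] assms(1) by (metis R_def add_left_mono finite_Diff order_trans)
  moreover have "(\<Sum>x\<in>I. card (A x)) = card (A i) + (\<Sum>x\<in>I-{i}. card (A x))"
    using assms by (simp add: sum.remove)
  moreover have "R = I - {i} - {j}" by (auto simp: R_def)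
  then have "(\<Sum>x\<in>I-{i}. card (A x)) = card (A j) + (\<Sum>x\<in>R. card (A x))"
    using sum.remove[of "I - {i}" j "\<lambda>x. card (A x)"] assms by simp
  ultimately show ?thesis using card_Un_Int[of "A i" "A j"] assms by simp
qed

definition pair_subsets :: "'a set \<Rightarrow> 'a set set" where
  "pair_subsets M = {P. P \<subseteq> M \<and> card P = 2}"

text \<open>Each unordered pair of disjoint 2-subsets is represented once, ordered by minima.\<close>

definition min_ordered_pairs :: "'a::linorder set \<Rightarrow> ('a set \<times> 'a set) set" where
  "min_ordered_pairs M = {(P1, P2). P1 \<in> pair_subsets M \<and> P2 \<in> pair_subsets (M - P1) \<and> Min P1 < Min P2}"

lemma finite_min_ordered_pairs: "finite M \<Longrightarrow> finite (min_ordered_pairs M)"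
  by (rule finite_subset[of _ "Pow M \<times> Pow M"]) (auto simp: min_ordered_pairs_def pair_subsets_def)

lemma card_eq_2_imp_Min_in: "card P = 2 \<Longrightarrow> finite P \<and> Min P \<in> P"
  by (metis Min_in card_0_eq card.infinite zero_neq_numeral)

lemma card_SIGMA_pair_subsets:
  assumes "finite M"
  shows "card (SIGMA P:pair_subsets M. pair_subsets (M - P)) = (card M choose 2) * ((card M - 2) choose 2)"
proof -
  have "card (pair_subsets (M - P)) = (card M - 2) choose 2" if "P \<in> pair_subsets M" for P
  proof -
    have "P \<subseteq> M" "card P = 2" using that by (auto simp: pair_subsets_def)
    then have "card (M - P) = card M - 2"
      using card_Diff_subset[of P M] card_ge_0_finite[of P] by simp
    then show ?thesis using assms n_subsets[of "M - P" 2] by (simp add: pair_subsets_def)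
  qed
  moreover have "card (pair_subsets M) = card M choose 2"
    unfolding pair_subsets_def using n_subsets[OF assms] by simp
  ultimately show ?thesis using assms by (simp add: card_SigmaI pair_subsets_def)
qed

lemma two_mult_card_min_ordered_pairs:
  assumes "finite M"
  shows "2 * card (min_ordered_pairs M) = (card M choose 2) * ((card M - 2) choose 2)"
proof -
  define D where "D = (SIGMA P:pair_subsets M. pair_subsets (M - P))"
  have "D = min_ordered_pairs M \<union> prod.swap ` min_ordered_pairs M"
  proof
    show "D \<subseteq> min_ordered_pairs M \<union> prod.swap ` min_ordered_pairs M"
    proof
      fix x assume "x \<in> D"
      moreover obtain P1 P2 where x: "x = (P1, P2)" by (cases x)
      ultimately have "card P1 = 2" "card P2 = 2" "P1 \<inter> P2 = {}"
        by (auto simp: D_def pair_subsets_def)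
      then have "Min P1 < Min P2 \<or> Min P2 < Min P1" using card_eq_2_imp_Min_in by fastforce
      then show "x \<in> min_ordered_pairs M \<union> prod.swap ` min_ordered_pairs M"
        using \<open>x \<in> D\<close> x by (auto simp: D_def min_ordered_pairs_def pair_subsets_def)
    qed
  qed (auto simp: D_def min_ordered_pairs_def pair_subsets_def)
  moreover have "min_ordered_pairs M \<inter> prod.swap ` min_ordered_pairs M = {}"
    by (auto simp: min_ordered_pairs_def)
  moreover have "finite (min_ordered_pairs M)" using assms by (rule finite_min_ordered_pairs)
  ultimately have "card D = 2 * card (min_ordered_pairs M)"
    by (simp add: card_Un_disjoint card_image)
  then show ?thesis using card_SIGMA_pair_subsets[OF assms] by (simp add: D_def)
qed

section \<open>Partitions generated by degree-3 socles\<close>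

definition down_closure :: "nat \<Rightarrow> nat list set \<Rightarrow> nat list set" where
  "down_closure k S = {y\<in>pts k. \<exists>s\<in>S. le_pt y s}"

lemma down_closure_closed_below:
  "x \<in> down_closure k S \<Longrightarrow> y \<in> pts k \<Longrightarrow> le_pt y x \<Longrightarrow> y \<in> down_closure k S"
  by (auto simp: down_closure_def intro: le_pt_trans)

locale cubic_antichain =
  fixes k :: nat and S :: "nat list set"
  assumes subset_pts: "S \<subseteq> pts k"
    and deg_eq_3: "s \<in> S \<Longrightarrow> deg s = 3"
    and finite: "finite S"
begin

lemma length_eq: "s \<in> S \<Longrightarrow> length s = k"
  using subset_pts by (auto simp: pts_def)

lemma supp_subset: "s \<in> S \<Longrightarrow> supp s \<subseteq> {..<k}"
  using supp_subset_lessThan length_eq by metis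

lemma subset_down_closure: "S \<subseteq> down_closure k S"
  using subset_pts by (auto simp: down_closure_def intro: le_pt_refl)

lemma deg_le_3: "y \<in> down_closure k S \<Longrightarrow> deg y \<le> 3"
  using deg_eq_3 le_pt_deg_mono by (force simp: down_closure_def)

lemma finite_down_closure: "finite (down_closure k S)"
proof -
  have "down_closure k S \<subseteq> {xs. set xs \<subseteq> {0..3} \<and> length xs = k}"
    using deg_le_3 by (fastforce simp: down_closure_def pts_def in_set_conv_nth dest: nth_le_deg)
  then show ?thesis by (rule finite_subset) (simp add: finite_lists_length_eq)
qed

lemma is_partition_down_closure: "is_partition k (down_closure k S)"
  using finite_down_closure down_closure_closed_below
  unfolding is_partition_def by (auto simp: down_closure_def)

lemma down_closure_deg_3: "{x\<in>down_closure k S. deg x = 3} = S"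
proof
  show "{x\<in>down_closure k S. deg x = 3} \<subseteq> S"
    using le_pt_deg_eq_imp_eq deg_eq_3 by (fastforce simp: down_closure_def)
qed (use subset_down_closure deg_eq_3 in auto)

lemma down_closure_deg_ge_3: "{x\<in>down_closure k S. 3 \<le> deg x} = S"
  using down_closure_deg_3 deg_le_3 by force

lemma socle_down_closure: "socle (down_closure k S) = S"
proof
  show "socle (down_closure k S) \<subseteq> S"
  proof
    fix x assume x: "x \<in> socle (down_closure k S)"
    then obtain s where "s \<in> S" "le_pt x s" by (auto simp: socle_def down_closure_def)
    then show "x \<in> S" using x subset_down_closure by (auto simp: socle_def)
  qed
  show "S \<subseteq> socle (down_closure k S)"
  proof
    fix s assume s: "s \<in> S"
    have "y = s" if "y \<in> down_closure k S" "le_pt s y" for y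
      using le_pt_deg_eq_imp_eq[OF that(2)] le_pt_deg_mono[OF that(2)] deg_le_3[OF that(1)]
        deg_eq_3[OF s] by simp
    then show "s \<in> socle (down_closure k S)" using s subset_down_closure by (auto simp: socle_def)
  qed
qed

lemma down_closure_deg_2: "{x\<in>down_closure k S. deg x = 2} = (\<Union>s\<in>S. lower_layer k s 2)"
  by (auto simp: down_closure_def lower_layer_def)

lemma down_closure_deg_0:
  assumes "S \<noteq> {}"
  shows "{x\<in>down_closure k S. deg x = 0} = {sqfree_pt k {}}"
proof -
  obtain s where s: "s \<in> S" using assms by auto
  then have "le_pt (sqfree_pt k {}) s" using length_eq by (simp add: le_pt_iff_nth)
  then have "sqfree_pt k {} \<in> down_closure k S" using s by (auto simp: down_closure_def pts_def)
  moreover have "x = sqfree_pt k {}" if "x \<in> down_closure k S" "deg x = 0" for x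
  proof -
    have "length x = k" using that(1) by (simp add: down_closure_def pts_def)
    moreover have "supp x = {}" using card_supp_le_deg[of x] that(2) by simp
    ultimately show ?thesis using eq_sqfree_pt_if_deg_le_1[of x] that(2) by simp
  qed
  moreover have "deg (sqfree_pt k {}) = 0" by (simp add: deg_sqfree_pt)
  ultimately show ?thesis by blast
qed

lemma card_down_closure: "card (down_closure k S) = (\<Sum>i\<le>3. hilb (down_closure k S) i)"
proof -
  have "down_closure k S = (\<Union>i\<le>3. {x\<in>down_closure k S. deg x = i})" using deg_le_3 by auto
  then have "card (down_closure k S) = card (\<Union>i\<le>3. {x\<in>down_closure k S. deg x = i})" by simp
  also have "\<dots> = (\<Sum>i\<le>3. hilb (down_closure k S) i)"
    unfolding hilb_def using finite_down_closure by (intro card_UN_disjoint) auto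
  finally show ?thesis .
qed
end

lemma exists_socle_above:
  assumes P: "is_partition k P" and x: "x \<in> P"
  shows "\<exists>y\<in>socle P. le_pt x y"
proof -
  define A where "A = {y\<in>P. le_pt x y}"
  have "finite A" using P by (simp add: A_def is_partition_def)
  moreover have "x \<in> A" using x by (simp add: A_def le_pt_refl)
  ultimately obtain y where y: "y \<in> A" "\<forall>z\<in>A. deg z \<le> deg y"
    using finite_image_iff Max_in[of "deg ` A"] Max_ge[of "deg ` A"] by fastforce
  have "\<forall>z\<in>P. le_pt y z \<longrightarrow> z = y"
  proof (intro ballI impI)
    fix z assume "z \<in> P" "le_pt y z"
    then have "z \<in> A" using y(1) by (auto simp: A_def intro: le_pt_trans)
    then show "z = y"
      using y(2) le_pt_deg_mono[OF \<open>le_pt y z\<close>] le_pt_deg_eq_imp_eq[OF \<open>le_pt y z\<close>] by force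
  qed
  then show ?thesis using y(1) unfolding A_def socle_def by blast
qed

lemma down_closure_socle:
  assumes "is_partition k P"
  shows "down_closure k (socle P) = P"
proof
  show "P \<subseteq> down_closure k (socle P)"
    using exists_socle_above[OF assms] assms by (auto simp: down_closure_def is_partition_def)
  show "down_closure k (socle P) \<subseteq> P"
    using assms by (auto simp: down_closure_def is_partition_def socle_def)
qed

definition socle_weight :: "nat list set \<Rightarrow> nat" where
  "socle_weight S = (\<Sum>s\<in>S. card (supp s))"

locale socle_config = cubic_antichain +
  fixes n :: nat
  assumes card_eq: "card S = n"
    and covers: "i < k \<Longrightarrow> \<exists>s\<in>S. i \<in> supp s"
begin

lemma down_closure_deg_1: "{x\<in>down_closure k S. deg x = 1} = (\<lambda>i. sqfree_pt k {i}) ` {..<k}"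
proof
  show "{x\<in>down_closure k S. deg x = 1} \<subseteq> (\<lambda>i. sqfree_pt k {i}) ` {..<k}"
    by (rule deg_1_subset_units) (auto simp: down_closure_def)
  show "(\<lambda>i. sqfree_pt k {i}) ` {..<k} \<subseteq> {x\<in>down_closure k S. deg x = 1}"
  proof clarify
    fix i assume "i < k"
    then obtain s where "s \<in> S" "i \<in> supp s" using covers by blast
    then show "sqfree_pt k {i} \<in> down_closure k S \<and> deg (sqfree_pt k {i}) = 1"
      using \<open>i < k\<close> length_eq
      by (auto simp: down_closure_def pts_def le_pt_iff_nth supp_def deg_sqfree_pt Suc_le_eq)
  qed
qed

lemma UN_supp: "(\<Union>s\<in>S. supp s) = {..<k}"
  using covers supp_subset by blast

lemma socle_weight_ge: "k \<le> socle_weight S"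
  using card_UN_le[OF finite, of supp] UN_supp by (simp add: socle_weight_def)

lemma socle_weight_le: "socle_weight S \<le> 3 * n"
proof -
  have "socle_weight S \<le> (\<Sum>s\<in>S. 3)"
    unfolding socle_weight_def using card_supp_le_deg deg_eq_3 by (metis sum_mono)
  then show ?thesis using card_eq by simp
qed

lemma plength_down_closure:
  assumes "n \<noteq> 0"
  shows "plength (down_closure k S) = 3"
proof -
  obtain s where "s \<in> S" using assms card_eq by fastforce
  then have "3 \<in> deg ` down_closure k S" using subset_down_closure deg_eq_3 by force
  then show ?thesis
    unfolding plength_def using finite_down_closure deg_le_3 by (intro Max_eqI) auto
qed

lemma card_Int_supp_le:
  assumes "s \<in> S" "s' \<in> S" "s \<noteq> s'"
  shows "k + card (supp s \<inter> supp s') \<le> socle_weight S"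
  using card_UN_add_card_Int_le[OF finite assms, of supp] UN_supp by (simp add: socle_weight_def)

lemma card_supp_eq_3_if_socle_weight_eq:
  assumes "socle_weight S = 3 * n" "s \<in> S"
  shows "card (supp s) = 3"
proof -
  have "(\<Sum>s\<in>S. card (supp s)) = (\<Sum>s\<in>S. 3)"
    using assms(1) card_eq by (simp add: socle_weight_def)
  moreover have "card (supp t) \<le> 3" if "t \<in> S" for t
    using card_supp_le_deg deg_eq_3[OF that] by metis
  ultimately show ?thesis using sum_mono_inv[OF _ _ assms(2) finite] by metis
qed

lemma lower_layers_disjoint:
  assumes dim: "3 * n = k + 1" and s: "s \<in> S" "s' \<in> S" "s \<noteq> s'"
  shows "lower_layer k s 2 \<inter> lower_layer k s' 2 = {}"
proof (rule ccontr)
  assume "lower_layer k s 2 \<inter> lower_layer k s' 2 \<noteq> {}"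
  then obtain d where d: "le_pt d s" "le_pt d s'" "deg d = 2"
    by (auto simp: lower_layer_def)
  have sub: "supp d \<subseteq> supp s \<inter> supp s'" using d le_pt_supp_mono by blast
  moreover have "supp d \<noteq> {}" using d(3) by (auto simp: deg_eq_sum_supp)
  ultimately have "card (supp s \<inter> supp s') \<noteq> 0" by auto
  then have one: "card (supp s \<inter> supp s') = 1" and full: "socle_weight S = 3 * n"
    using card_Int_supp_le[OF s] socle_weight_le dim by linarith+
  have "card (supp s) = deg s"
    using card_supp_eq_3_if_socle_weight_eq[OF full s(1)] deg_eq_3[OF s(1)] by simp
  then have "d!i \<le> 1" if "i < length d" for i
  proof -
    have "i < length s" "d!i \<le> s!i" using that d(1) by (auto simp: le_pt_iff_nth)
    then show ?thesis using nth_le_1_if_card_supp_eq_deg[OF \<open>card (supp s) = deg s\<close>] by fastforce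
  qed
  then have "card (supp d) = 2" using deg_eq_card_supp_if_nth_le_1 d(3) by metis
  then show False
    using card_mono[OF _ sub] one by simp
qed

lemma hilb_2_down_closure:
  assumes "3 * n = k + 1"
  shows "hilb (down_closure k S) 2 = socle_weight S"
proof -
  have "hilb (down_closure k S) 2 = (\<Sum>s\<in>S. card (lower_layer k s 2))"
    unfolding hilb_def down_closure_deg_2
    using lower_layers_disjoint[OF assms] finite finite_lower_layer by (intro card_UN_disjoint) auto
  also have "\<dots> = socle_weight S"
    unfolding socle_weight_def using card_lower_layer length_eq deg_eq_3 by simp
  finally show ?thesis .
qed

lemma card_supp_le_3: "s \<in> S \<Longrightarrow> card (supp s) \<le> 3"
  using card_supp_le_deg deg_eq_3 by metis

lemma sqfree_pt_supp_if_card_supp_eq_3: "s \<in> S \<Longrightarrow> card (supp s) = 3 \<Longrightarrow> sqfree_pt k (supp s) = s"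
  using sqfree_pt_supp_if_card_supp_eq_deg length_eq deg_eq_3 by metis

lemma supp_disjoint_if_socle_weight_eq:
  "socle_weight S = k \<Longrightarrow> s \<in> S \<Longrightarrow> s' \<in> S \<Longrightarrow> s \<noteq> s' \<Longrightarrow> supp s \<inter> supp s' = {}"
  using card_Int_supp_le by fastforce

lemma supp_image_triple_partition:
  assumes "R \<subseteq> S" "\<And>r. r \<in> R \<Longrightarrow> card (supp r) = 3"
    and "\<And>r r'. r \<in> R \<Longrightarrow> r' \<in> R \<Longrightarrow> r \<noteq> r' \<Longrightarrow> supp r \<inter> supp r' = {}"
  shows "supp ` R \<in> triple_partitions (\<Union>r\<in>R. supp r)"
  unfolding triple_partitions_def using assms by blast

lemma socle_weight_cases: "3 * n = k + 1 \<Longrightarrow> socle_weight S = k \<or> socle_weight S = k + 1"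
  using socle_weight_ge socle_weight_le by linarith

lemma hilb_down_closure:
  assumes "3 * n = k + 1"
  shows "map (hilb (down_closure k S)) [0..<4] = [1, k, socle_weight S, n]"
    and "card (down_closure k S) = 1 + k + socle_weight S + n"
proof -
  have "S \<noteq> {}" using assms card_eq by auto
  then have "hilb (down_closure k S) 0 = 1" "hilb (down_closure k S) 1 = k"
    "hilb (down_closure k S) 3 = n"
    using down_closure_deg_0 down_closure_deg_1 card_units down_closure_deg_3 card_eq
    by (simp_all add: hilb_def)
  then show "map (hilb (down_closure k S)) [0..<4] = [1, k, socle_weight S, n]"
    "card (down_closure k S) = 1 + k + socle_weight S + n"
    using hilb_2_down_closure[OF assms] card_down_closure
    by (simp_all add: upt_rec numeral_2_eq_2 numeral_3_eq_3 atMost_Suc)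
qed
end

lemma socle_config_socle:
  assumes P: "is_partition k P" and emb: "hilb P 1 = k" and type: "socle_type_0003 P n"
  shows "socle_config k (socle P) n"
proof unfold_locales
  have Pk: "P \<subseteq> pts k" using P by (simp add: is_partition_def)
  show "socle P \<subseteq> pts k" "finite (socle P)" using Pk P by (auto simp: socle_def is_partition_def)
  show "deg s = 3" if "s \<in> socle P" for s
    using type that by (auto simp: socle_type_0003_def)
  show "card (socle P) = n" using type by (simp add: socle_type_0003_def)
  have "{x\<in>P. deg x = 1} = (\<lambda>i. sqfree_pt k {i}) ` {..<k}"
    using deg_1_subset_units[OF Pk] emb card_units
    by (intro card_subset_eq) (auto simp: hilb_def)
  then have unit: "sqfree_pt k {i} \<in> P" if "i < k" for i using that by auto
  fix i assume "i < k"
  then obtain s where "s \<in> socle P" "le_pt (sqfree_pt k {i}) s"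
    using exists_socle_above[OF P unit] by blast
  then show "\<exists>s\<in>socle P. i \<in> supp s"
    using le_pt_supp_mono \<open>i < k\<close> by fastforce
qed

lemma deg_le_plength: "is_partition k P \<Longrightarrow> x \<in> P \<Longrightarrow> deg x \<le> plength P"
  unfolding plength_def is_partition_def by (simp add: Max_ge)

lemma socle_eq_deg_ge_3:
  assumes "is_partition k P" "plength P = 3" "socle P \<subseteq> {x\<in>P. 3 \<le> deg x}"
  shows "socle P = {x\<in>P. 3 \<le> deg x}"
proof
  have le3: "deg x \<le> 3" if "x \<in> P" for x
    using deg_le_plength[OF assms(1) that] assms(2) by simp
  show "{x\<in>P. 3 \<le> deg x} \<subseteq> socle P"
  proof
    fix x assume x: "x \<in> {x\<in>P. 3 \<le> deg x}"
    have "\<forall>z\<in>P. le_pt x z \<longrightarrow> z = x"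
      using le_pt_deg_eq_imp_eq le_pt_deg_mono le3 x by (metis (mono_tags, lifting) le_antisym mem_Collect_eq)
    then show "x \<in> socle P" using x by (simp add: socle_def)
  qed
qed (use assms(3) in blast)

lemma sqfree_pts_of_blocks:
  assumes "Q \<subseteq> Pow {..<k}" "\<And>B. B \<in> Q \<Longrightarrow> card B = 3"
  shows "inj_on (sqfree_pt k) Q" "sqfree_pt k ` Q \<subseteq> pts k"
    "\<And>x. x \<in> sqfree_pt k ` Q \<Longrightarrow> deg x = 3"
    "\<And>B. B \<in> Q \<Longrightarrow> supp (sqfree_pt k B) = B"
    "socle_weight (sqfree_pt k ` Q) = 3 * card Q"
proof -
  show inj: "inj_on (sqfree_pt k) Q" using inj_on_subset[OF inj_on_sqfree_pt assms(1)] .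
  show "sqfree_pt k ` Q \<subseteq> pts k" by (auto simp: pts_def)
  show "\<And>x. x \<in> sqfree_pt k ` Q \<Longrightarrow> deg x = 3" using assms deg_sqfree_pt by auto
  show supp: "\<And>B. B \<in> Q \<Longrightarrow> supp (sqfree_pt k B) = B" using assms(1) by auto
  show "socle_weight (sqfree_pt k ` Q) = 3 * card Q"
    unfolding socle_weight_def sum.reindex[OF inj] using supp assms(2) by simp
qed

context
  fixes k n :: nat
  assumes dim: "3 * n = k + 1"
begin

lemma hilb_partition_with_cubic_socle:
  assumes "is_partition k P" "hilb P 1 = k" "socle_type_0003 P n"
  shows "plength P = 3 \<and>
    (map (hilb P) [0..<4] = [1, k, k, n] \<or> map (hilb P) [0..<4] = [1, k, k + 1, n])"
proof -
  interpret socle_config k "socle P" n using socle_config_socle[OF assms] .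
  have "n \<noteq> 0" using dim by auto
  then show ?thesis
    using plength_down_closure hilb_down_closure(1)[OF dim] socle_weight_cases[OF dim]
    unfolding down_closure_socle[OF assms(1)] by auto
qed

lemma M_partitions_eq_image_down_closure:
  "{P. M_partition k q n P \<and> plength P = 3}
     = down_closure k ` {S. socle_config k S n \<and> socle_weight S = q}"
proof
  show "down_closure k ` {S. socle_config k S n \<and> socle_weight S = q}
          \<subseteq> {P. M_partition k q n P \<and> plength P = 3}"
  proof clarify
    fix S assume "socle_config k S n"
    then interpret socle_config k S n .
    have "n \<noteq> 0" using dim by auto
    then show "M_partition k (socle_weight S) n (down_closure k S) \<and> plength (down_closure k S) = 3"
      using is_partition_down_closure hilb_down_closure[OF dim] socle_down_closure
        down_closure_deg_ge_3 card_eq plength_down_closure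
      unfolding M_partition_def by (simp add: upt_rec numeral_2_eq_2)
  qed
  show "{P. M_partition k q n P \<and> plength P = 3}
          \<subseteq> down_closure k ` {S. socle_config k S n \<and> socle_weight S = q}"
  proof clarify
    fix P assume M: "M_partition k q n P" and len: "plength P = 3"
    then have P: "is_partition k P" "hilb P 1 = k" "hilb P 2 = q"
      "socle P = {x\<in>P. 3 \<le> deg x}" "card {x\<in>P. 3 \<le> deg x} = n"
      using socle_eq_deg_ge_3 by (auto simp: M_partition_def)
    then have "socle_type_0003 P n"
      using len deg_le_plength[OF P(1)] by (force simp: socle_type_0003_def)
    then interpret socle_config k "socle P" n using socle_config_socle P(1,2) by blast
    have "socle_weight (socle P) = q"
      using hilb_down_closure(1)[OF dim] P(3) unfolding down_closure_socle[OF P(1)]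
      by (simp add: upt_rec numeral_2_eq_2)
    then show "P \<in> down_closure k ` {S. socle_config k S n \<and> socle_weight S = q}"
      using down_closure_socle[OF P(1)] socle_config_axioms by force
  qed
qed

lemma alpha_eq_card_socle_configs:
  "alpha k q n 3 = card {S. socle_config k S n \<and> socle_weight S = q}"
proof -
  have "inj_on (down_closure k) {S. socle_config k S n \<and> socle_weight S = q}"
    by (rule inj_onI) (metis cubic_antichain.socle_down_closure socle_config.axioms(1) mem_Collect_eq)
  then show ?thesis unfolding alpha_def M_partitions_eq_image_down_closure by (simp add: card_image)
qed

end

section \<open>Weight k: one socle point of the form x_a^2 x_b\<close>

definition sq_pt :: "nat \<Rightarrow> nat \<Rightarrow> nat \<Rightarrow> nat list" where
  "sq_pt k a b = map (\<lambda>i. if i = a then 2 else if i = b then 1 else 0) [0..<k]"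

lemma length_sq_pt [simp]: "length (sq_pt k a b) = k"
  by (simp add: sq_pt_def)

lemma nth_sq_pt: "i < k \<Longrightarrow> sq_pt k a b ! i = (if i = a then 2 else if i = b then 1 else 0)"
  by (simp add: sq_pt_def)

lemma supp_sq_pt: "a < k \<Longrightarrow> b < k \<Longrightarrow> supp (sq_pt k a b) = {a, b}"
  by (auto simp: supp_def nth_sq_pt split: if_splits)

lemma deg_sq_pt: "a < k \<Longrightarrow> b < k \<Longrightarrow> a \<noteq> b \<Longrightarrow> deg (sq_pt k a b) = 3"
  by (simp add: deg_eq_sum_supp supp_sq_pt nth_sq_pt)

lemma sq_pt_eq_iff:
  assumes "a < k" "b < k" "a \<noteq> b" "a' < k" "b' < k" "a' \<noteq> b'"
  shows "sq_pt k a b = sq_pt k a' b' \<longleftrightarrow> a = a' \<and> b = b'"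
proof
  assume e: "sq_pt k a b = sq_pt k a' b'"
  have "sq_pt k a b ! a = sq_pt k a' b' ! a" "sq_pt k a b ! b = sq_pt k a' b' ! b"
    using e by simp_all
  then show "a = a' \<and> b = b'" using assms by (auto simp: nth_sq_pt split: if_splits)
qed simp

lemma eq_sq_pt_if_card_supp_eq_2:
  assumes len: "length s = k" and deg: "deg s = 3" and card: "card (supp s) = 2"
  obtains a b where "a < k" "b < k" "a \<noteq> b" "s = sq_pt k a b"
proof -
  obtain a b where ab: "supp s = {a, b}" "a \<noteq> b" using card card_2_iff[of "supp s"] by blast
  then have abk: "a < k" "b < k" "0 < s!a" "0 < s!b" using len by (auto simp: supp_def)
  have sum: "s!a + s!b = 3" using deg ab by (simp add: deg_eq_sum_supp)
  have zero: "s!i = 0" if "i < k" "i \<noteq> a" "i \<noteq> b" for i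
  proof -
    have "i \<notin> supp s" using that ab by auto
    then show ?thesis using that len by (simp add: supp_def)
  qed
  have "s!a = 2 \<and> s!b = 1 \<or> s!a = 1 \<and> s!b = 2" using sum abk by auto
  then have "s = sq_pt k a b \<or> s = sq_pt k b a"
    using zero len ab(2) by (auto intro!: nth_equalityI simp: nth_sq_pt split: if_splits)
  then show ?thesis using that abk ab(2) by metis
qed

definition sq_socle_params :: "nat \<Rightarrow> (nat \<times> nat \<times> nat set set) set" where
  "sq_socle_params k = (SIGMA a:{..<k}. SIGMA b:{..<k} - {a}. triple_partitions ({..<k} - {a, b}))"

definition sq_socle :: "nat \<Rightarrow> nat \<times> nat \<times> nat set set \<Rightarrow> nat list set" where
  "sq_socle k = (\<lambda>(a, b, Q). insert (sq_pt k a b) (sqfree_pt k ` Q))"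

lemma sq_socle_paramsD:
  assumes "(a, b, Q) \<in> sq_socle_params k"
  shows "a < k" "b < k" "a \<noteq> b" "Q \<in> triple_partitions ({..<k} - {a, b})"
    "Q \<subseteq> Pow {..<k}" "\<And>B. B \<in> Q \<Longrightarrow> card B = 3" "sq_pt k a b \<notin> sqfree_pt k ` Q"
proof -
  show ab: "a < k" "b < k" "a \<noteq> b" and Q: "Q \<in> triple_partitions ({..<k} - {a, b})"
    using assms by (auto simp: sq_socle_params_def)
  show sub: "Q \<subseteq> Pow {..<k}" and "\<And>B. B \<in> Q \<Longrightarrow> card B = 3"
    using triple_partitionsD[OF Q] by auto
  then show "sq_pt k a b \<notin> sqfree_pt k ` Q"
    using supp_sq_pt[OF ab(1,2)] ab(3) by (force simp: Int_absorb2)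
qed

lemma card_sq_socle_params:
  "card (sq_socle_params k) = k * (k - 1) * triple_partition_count (k - 2)"
proof -
  have "card (triple_partitions ({..<k} - {a, b})) = triple_partition_count (k - 2)"
    if "a < k" "b < k" "a \<noteq> b" for a b
    using that by (simp add: card_triple_partitions card_Diff_subset numeral_2_eq_2)
  then show ?thesis
    unfolding sq_socle_params_def
    by (simp add: card_SigmaI finite_triple_partitions)
qed

lemma inj_on_sq_socle: "inj_on (sq_socle k) (sq_socle_params k)"
proof (rule inj_onI)
  fix x y assume x: "x \<in> sq_socle_params k" and y: "y \<in> sq_socle_params k"
    and e: "sq_socle k x = sq_socle k y"
  obtain a b Q a' b' Q' where xy: "x = (a, b, Q)" "y = (a', b', Q')" by (cases x, cases y)
  note X = sq_socle_paramsD[OF x[unfolded xy(1)]] and Y = sq_socle_paramsD[OF y[unfolded xy(2)]]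
  have "sq_pt k a b \<notin> sqfree_pt k ` Q'"
    using Y(5,6) supp_sq_pt[OF X(1,2)] X(3) by (force simp: Int_absorb2)
  then have "sq_pt k a b = sq_pt k a' b'" using e by (auto simp: sq_socle_def xy)
  then have ab: "a = a'" "b = b'" using sq_pt_eq_iff X Y by blast+
  then have "sqfree_pt k ` Q = sqfree_pt k ` Q'"
    using e X(7) Y(7) by (simp add: sq_socle_def xy insert_ident)
  then have "Q = Q'" using inj_on_image_eq_iff[OF inj_on_sqfree_pt X(5) Y(5)] by simp
  then show "x = y" using ab xy by simp
qed

context
  fixes k n :: nat
  assumes dim: "3 * n = k + 1"
begin

lemma socle_config_sq_socle:
  assumes x: "x \<in> sq_socle_params k"
  shows "socle_config k (sq_socle k x) n \<and> socle_weight (sq_socle k x) = k"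
proof -
  obtain a b Q where xe: "x = (a, b, Q)" by (cases x)
  note X = sq_socle_paramsD[OF x[unfolded xe]]
  note blocks = sqfree_pts_of_blocks[OF X(5,6)]
  have "k - 2 = 3 * card Q"
    using card_eq_3_card_triple_partition[OF X(4)] X(1-3) by (simp add: card_Diff_subset)
  then have cQ: "card Q + 1 = n" using dim by simp
  have fQ: "finite Q" using X(5) by (rule finite_subset) simp
  have S: "sq_socle k x = insert (sq_pt k a b) (sqfree_pt k ` Q)" by (simp add: xe sq_socle_def)
  have "socle_config k (sq_socle k x) n"
  proof unfold_locales
    show "sq_socle k x \<subseteq> pts k" using blocks(2) by (auto simp: S pts_def)
    show "deg s = 3" if "s \<in> sq_socle k x" for s
      using that blocks(3) deg_sq_pt[OF X(1-3)] by (auto simp: S)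
    show "finite (sq_socle k x)" using fQ by (simp add: S)
    show "card (sq_socle k x) = n"
      using fQ X(7) card_image[OF blocks(1)] cQ by (simp add: S)
    fix i assume "i < k"
    then have "i \<in> {a, b} \<or> (\<exists>B\<in>Q. i \<in> B)" using triple_partitionsD(1)[OF X(4)] by auto
    then show "\<exists>s\<in>sq_socle k x. i \<in> supp s"
      using supp_sq_pt[OF X(1,2)] blocks(4) by (auto simp: S)
  qed
  moreover have "socle_weight (sq_socle k x) = k"
    using fQ X(7) blocks(5) supp_sq_pt[OF X(1,2)] X(3) cQ dim
    by (simp add: S socle_weight_def)
  ultimately show ?thesis ..
qed

lemma sq_socle_surj:
  assumes "socle_config k S n" and weight: "socle_weight S = k"
  shows "S \<in> sq_socle k ` sq_socle_params k"
proof -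
  interpret socle_config k S n by fact
  have "\<exists>s0\<in>S. card (supp s0) \<noteq> 3"
  proof (rule ccontr)
    assume "\<not> ?thesis"
    then have "socle_weight S = 3 * n" using card_eq by (simp add: socle_weight_def)
    then show False using weight dim by simp
  qed
  then obtain s0 where s0: "s0 \<in> S" "card (supp s0) \<noteq> 3" by blast
  define R where "R = S - {s0}"
  have S: "S = insert s0 R" "s0 \<notin> R" using s0(1) by (auto simp: R_def)
  have cR: "card R + 1 = n" using card_Suc_Diff1[OF finite s0(1)] card_eq by (simp add: R_def)
  have "(\<Sum>r\<in>R. card (supp r)) \<le> (\<Sum>r\<in>R. 3)"
    using card_supp_le_3 by (intro sum_mono) (auto simp: R_def)
  moreover have "card (supp s0) + (\<Sum>r\<in>R. card (supp r)) = k"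
    using weight S finite by (simp add: socle_weight_def)
  ultimately have c2: "card (supp s0) = 2" and "(\<Sum>r\<in>R. card (supp r)) = (\<Sum>r\<in>R. 3)"
    using card_supp_le_3[OF s0(1)] s0(2) cR dim by auto
  then have c3: "card (supp r) = 3" if "r \<in> R" for r
    using sum_mono_inv[of "\<lambda>r. card (supp r)" R "\<lambda>_. 3"] card_supp_le_3 finite that
    by (auto simp: R_def)
  obtain a b where ab: "a < k" "b < k" "a \<noteq> b" "s0 = sq_pt k a b"
    using eq_sq_pt_if_card_supp_eq_2 length_eq deg_eq_3 s0(1) c2 by metis
  have disj: "supp r \<inter> supp r' = {}" if "r \<in> S" "r' \<in> S" "r \<noteq> r'" for r r'
    using supp_disjoint_if_socle_weight_eq[OF weight that] .
  have "(\<Union>r\<in>R. supp r) = {..<k} - {a, b}"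
    using UN_supp disj[of s0] supp_sq_pt[OF ab(1,2)] ab(4) S by blast
  then have "supp ` R \<in> triple_partitions ({..<k} - {a, b})"
    using supp_image_triple_partition[of R] c3 disj by (auto simp: R_def)
  then have "(a, b, supp ` R) \<in> sq_socle_params k" using ab by (simp add: sq_socle_params_def)
  moreover have "sqfree_pt k ` supp ` R = R"
    using sqfree_pt_supp_if_card_supp_eq_3 c3 by (force simp: R_def image_image)
  then have "S = sq_socle k (a, b, supp ` R)" using S ab(4) by (simp add: sq_socle_def)
  ultimately show ?thesis by blast
qed

lemma card_socle_configs_weight_k:
  "card {S. socle_config k S n \<and> socle_weight S = k} = k * (k - 1) * triple_partition_count (k - 2)"
proof -
  have "sq_socle k ` sq_socle_params k = {S. socle_config k S n \<and> socle_weight S = k}"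
    using socle_config_sq_socle sq_socle_surj by blast
  then show ?thesis using card_image[OF inj_on_sq_socle] card_sq_socle_params by metis
qed

end

section \<open>Weight k + 1: two socle points sharing a variable\<close>

definition nodal_blocks :: "nat \<Rightarrow> nat set \<Rightarrow> nat set \<Rightarrow> nat set set \<Rightarrow> nat set set" where
  "nodal_blocks v P1 P2 Q = insert (insert v P1) (insert (insert v P2) Q)"

definition nodal_socle_params :: "nat \<Rightarrow> (nat \<times> (nat set \<times> nat set) \<times> nat set set) set" where
  "nodal_socle_params k = (SIGMA v:{..<k}. SIGMA p:min_ordered_pairs ({..<k} - {v}).
     triple_partitions ({..<k} - insert v (fst p \<union> snd p)))"

definition nodal_socle :: "nat \<Rightarrow> nat \<times> (nat set \<times> nat set) \<times> nat set set \<Rightarrow> nat list set" where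
  "nodal_socle k = (\<lambda>(v, (P1, P2), Q). sqfree_pt k ` nodal_blocks v P1 P2 Q)"

lemma nodal_socle_paramsD:
  assumes "(v, (P1, P2), Q) \<in> nodal_socle_params k"
  shows "v < k" "P1 \<subseteq> {..<k} - {v}" "card P1 = 2" "P2 \<subseteq> {..<k} - {v} - P1" "card P2 = 2"
    "Min P1 < Min P2" "Q \<in> triple_partitions ({..<k} - insert v (P1 \<union> P2))"
  using assms by (auto simp: nodal_socle_params_def min_ordered_pairs_def pair_subsets_def)

lemma card_outside_nodal_pair:
  assumes "v < k" "P1 \<subseteq> {..<k} - {v}" "card P1 = 2" "P2 \<subseteq> {..<k} - {v} - P1" "card P2 = 2"
  shows "card ({..<k} - insert v (P1 \<union> P2)) = k - 5" "5 \<le> k"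
proof -
  have "finite P1" "finite P2" using assms(3,5) card_eq_2_imp_Min_in by blast+
  moreover have "P1 \<inter> P2 = {}" "v \<notin> P1 \<union> P2" using assms(2,4) by blast+
  ultimately have "card (insert v (P1 \<union> P2)) = 5" "finite (insert v (P1 \<union> P2))"
    using assms(3,5) by (simp_all add: card_Un_disjoint)
  moreover have "insert v (P1 \<union> P2) \<subseteq> {..<k}" using assms(1,2,4) by blast
  ultimately show "card ({..<k} - insert v (P1 \<union> P2)) = k - 5" "5 \<le> k"
    using card_Diff_subset[of "insert v (P1 \<union> P2)" "{..<k}"]
      card_mono[of "{..<k}" "insert v (P1 \<union> P2)"] by auto
qed

lemma two_mult_card_nodal_socle_params:
  "2 * card (nodal_socle_params k)
     = k * (((k - 1) choose 2) * ((k - 3) choose 2)) * triple_partition_count (k - 5)"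
proof -
  have inner: "card (triple_partitions ({..<k} - insert v (fst p \<union> snd p))) = triple_partition_count (k - 5)"
    if "v < k" "p \<in> min_ordered_pairs ({..<k} - {v})" for v p
    using that card_outside_nodal_pair(1)[of v k "fst p" "snd p"]
    by (auto simp: card_triple_partitions min_ordered_pairs_def pair_subsets_def)
  have "card (nodal_socle_params k)
      = (\<Sum>v<k. card (min_ordered_pairs ({..<k} - {v})) * triple_partition_count (k - 5))"
    unfolding nodal_socle_params_def using inner
    by (simp add: card_SigmaI finite_triple_partitions finite_SigmaI finite_min_ordered_pairs)
  then have "2 * card (nodal_socle_params k)
      = (\<Sum>v<k. 2 * card (min_ordered_pairs ({..<k} - {v})) * triple_partition_count (k - 5))"
    by (simp add: sum_distrib_left mult.assoc)
  also have "\<dots> = (\<Sum>v<k. ((k - 1) choose 2) * ((k - 3) choose 2) * triple_partition_count (k - 5))"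
  proof (rule sum.cong)
    fix v assume "v \<in> {..<k}"
    then have "2 * card (min_ordered_pairs ({..<k} - {v})) = ((k - 1) choose 2) * ((k - 3) choose 2)"
      using two_mult_card_min_ordered_pairs[of "{..<k} - {v}"] by (simp add: numeral_3_eq_3)
    then show "2 * card (min_ordered_pairs ({..<k} - {v})) * triple_partition_count (k - 5)
        = ((k - 1) choose 2) * ((k - 3) choose 2) * triple_partition_count (k - 5)" by simp
  qed simp
  finally show ?thesis by simp
qed

lemma nodal_blocks_props:
  assumes x: "(v, (P1, P2), Q) \<in> nodal_socle_params k"
  defines "X \<equiv> nodal_blocks v P1 P2 Q"
  shows "X \<subseteq> Pow {..<k}" "\<And>B. B \<in> X \<Longrightarrow> card B = 3" "\<Union>X = {..<k}"
    "\<And>B B'. B \<in> X \<Longrightarrow> B' \<in> X \<Longrightarrow> B \<noteq> B' \<Longrightarrow> B \<inter> B' \<subseteq> {v}"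
    "insert v P1 \<noteq> insert v P2" "insert v P1 \<notin> Q" "insert v P2 \<notin> Q"
    "card X = card Q + 2" "3 * card Q = k - 5"
proof -
  note h = nodal_socle_paramsD[OF x]
  note T = triple_partitionsD[OF h(7)]
  have f: "finite P1" "finite P2" "P1 \<noteq> {}" "P2 \<noteq> {}" using h(3,5) card_eq_2_imp_Min_in by auto
  have vQ: "B \<inter> insert v (P1 \<union> P2) = {}" if "B \<in> Q" for B using T(1) that by auto
  show "X \<subseteq> Pow {..<k}" "\<Union>X = {..<k}" using h T(1) by (auto simp: X_def nodal_blocks_def)
  have "v \<notin> P1" "v \<notin> P2" using h(2,4) by blast+
  then have "card (insert v P1) = 3" "card (insert v P2) = 3" using f h(3,5) by simp_all
  then show "\<And>B. B \<in> X \<Longrightarrow> card B = 3" using T(2) by (auto simp: X_def nodal_blocks_def)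
  show "\<And>B B'. B \<in> X \<Longrightarrow> B' \<in> X \<Longrightarrow> B \<noteq> B' \<Longrightarrow> B \<inter> B' \<subseteq> {v}"
    unfolding X_def nodal_blocks_def using T(4) vQ h(4) by blast
  show Q: "insert v P1 \<notin> Q" "insert v P2 \<notin> Q" using vQ by blast+
  show ne: "insert v P1 \<noteq> insert v P2" using h(2,4) f by blast
  have "finite Q" using T(1) by (metis finite_Diff finite_UnionD finite_lessThan)
  then show "card X = card Q + 2" using Q ne by (simp add: X_def nodal_blocks_def)
  show "3 * card Q = k - 5"
    using card_eq_3_card_triple_partition[OF h(7)] card_outside_nodal_pair(1)[OF h(1-5)] by simp
qed

lemma inj_on_nodal_socle: "inj_on (nodal_socle k) (nodal_socle_params k)"
proof (rule inj_onI)
  fix x y assume x: "x \<in> nodal_socle_params k" and y: "y \<in> nodal_socle_params k"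
    and e: "nodal_socle k x = nodal_socle k y"
  obtain v P1 P2 Q v' P1' P2' Q' where xy: "x = (v, (P1, P2), Q)" "y = (v', (P1', P2'), Q')"
    by (cases x, cases y) auto
  note d = nodal_socle_paramsD[OF x[unfolded xy(1)]] and d' = nodal_socle_paramsD[OF y[unfolded xy(2)]]
  note X = nodal_blocks_props[OF x[unfolded xy(1)]] and X' = nodal_blocks_props[OF y[unfolded xy(2)]]
  have XX: "nodal_blocks v P1 P2 Q = nodal_blocks v' P1' P2' Q'"
    using e inj_on_image_eq_iff[OF inj_on_sqfree_pt X(1) X'(1)] by (simp add: xy nodal_socle_def)
  have "insert v P1 \<in> nodal_blocks v' P1' P2' Q'" "insert v P2 \<in> nodal_blocks v' P1' P2' Q'"
    unfolding XX[symmetric] by (simp_all add: nodal_blocks_def)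
  then have vv: "v = v'" using X'(4) X(5) by blast
  have ni: "v \<notin> P1" "v \<notin> P2" "v \<notin> P1'" "v \<notin> P2'" using d d' vv by auto
  have "{B \<in> nodal_blocks v P1 P2 Q. v \<in> B} = {insert v P1, insert v P2}"
    "{B \<in> nodal_blocks v P1' P2' Q'. v \<in> B} = {insert v P1', insert v P2'}"
    using triple_partitionsD(1)[OF d(7)] triple_partitionsD(1)[OF d'(7)] vv
    by (auto simp: nodal_blocks_def)
  then have "{insert v P1, insert v P2} = {insert v P1', insert v P2'}" using XX vv by simp
  then have "P1 = P1' \<and> P2 = P2' \<or> P1 = P2' \<and> P2 = P1'"
    using ni by (auto simp: doubleton_eq_iff insert_ident)
  then have pp: "P1 = P1'" "P2 = P2'" using d(6) d'(6) by auto
  have "Q = nodal_blocks v P1 P2 Q - {insert v P1, insert v P2}"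
    using X(6,7) by (auto simp: nodal_blocks_def)
  also have "\<dots> = Q'" using XX vv pp X'(6,7) by (auto simp: nodal_blocks_def)
  finally show "x = y" using xy vv pp by simp
qed

context
  fixes k n :: nat
  assumes dim: "3 * n = k + 1"
begin

lemma socle_config_nodal_socle:
  assumes x: "x \<in> nodal_socle_params k"
  shows "socle_config k (nodal_socle k x) n \<and> socle_weight (nodal_socle k x) = k + 1"
proof -
  obtain v P1 P2 Q where xe: "x = (v, (P1, P2), Q)" by (cases x) auto
  define X where "X = nodal_blocks v P1 P2 Q"
  note h = nodal_socle_paramsD[OF x[unfolded xe]]
  note props = nodal_blocks_props[OF x[unfolded xe], folded X_def]
  note blocks = sqfree_pts_of_blocks[OF props(1,2)]
  have S: "nodal_socle k x = sqfree_pt k ` X" by (simp add: xe X_def nodal_socle_def)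
  have "finite X" using props(1) finite_subset by auto
  have cX: "card X = n" using props(8,9) card_outside_nodal_pair(2)[OF h(1-5)] dim by linarith
  have "socle_config k (nodal_socle k x) n"
  proof unfold_locales
    show "nodal_socle k x \<subseteq> pts k" "\<And>s. s \<in> nodal_socle k x \<Longrightarrow> deg s = 3"
      using blocks(2,3) by (simp_all add: S)
    show "finite (nodal_socle k x)" using \<open>finite X\<close> by (simp add: S)
    show "card (nodal_socle k x) = n" using card_image[OF blocks(1)] cX by (simp add: S)
    fix i assume "i < k"
    then obtain B where "B \<in> X" "i \<in> B" using props(3) by blast
    then show "\<exists>s\<in>nodal_socle k x. i \<in> supp s" using blocks(4) by (auto simp: S)
  qed
  moreover have "socle_weight (nodal_socle k x) = k + 1" using blocks(5) cX dim by (simp add: S)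
  ultimately show ?thesis ..
qed

lemma exists_nodal_pair:
  assumes "socle_config k S n" "socle_weight S = k + 1"
  obtains t t' v where "t \<in> S" "t' \<in> S" "t \<noteq> t'" "supp t \<inter> supp t' = {v}"
    "Min (supp t - {v}) < Min (supp t' - {v})"
proof -
  interpret socle_config k S n by fact
  have "\<exists>s\<in>S. \<exists>s'\<in>S. s \<noteq> s' \<and> supp s \<inter> supp s' \<noteq> {}"
  proof (rule ccontr)
    assume "\<not> ?thesis"
    then have "card (\<Union>s\<in>S. supp s) = socle_weight S"
      unfolding socle_weight_def by (intro card_UN_disjoint) (auto simp: finite)
    then show False using UN_supp assms(2) by simp
  qed
  then obtain s s' where ss: "s \<in> S" "s' \<in> S" "s \<noteq> s'" "supp s \<inter> supp s' \<noteq> {}" by blast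
  moreover have "card (supp s \<inter> supp s') \<noteq> 0" using ss(4) by simp
  ultimately have "card (supp s \<inter> supp s') = 1"
    using card_Int_supp_le[OF ss(1-3)] assms(2) by linarith
  then obtain v where v: "supp s \<inter> supp s' = {v}" by (auto simp: card_Suc_eq)
  have "v \<in> supp s" "v \<in> supp s'" using v by auto
  then have "card (supp s - {v}) = 2" "card (supp s' - {v}) = 2"
    using card_supp_eq_3_if_socle_weight_eq[of s] card_supp_eq_3_if_socle_weight_eq[of s']
      ss(1,2) assms(2) dim by simp_all
  then have "Min (supp s - {v}) \<in> supp s - {v}" "Min (supp s' - {v}) \<in> supp s' - {v}"
    using card_eq_2_imp_Min_in by blast+
  then have "Min (supp s - {v}) < Min (supp s' - {v}) \<or> Min (supp s' - {v}) < Min (supp s - {v})"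
    using v by (metis DiffD1 DiffD2 IntI insertCI nat_neq_iff)
  then show ?thesis using that ss v by (metis Int_commute)
qed

lemma nodal_socle_surj:
  assumes "socle_config k S n" and weight: "socle_weight S = k + 1"
  shows "S \<in> nodal_socle k ` nodal_socle_params k"
proof -
  interpret socle_config k S n by fact
  obtain t t' v where tt: "t \<in> S" "t' \<in> S" "t \<noteq> t'" "supp t \<inter> supp t' = {v}"
    "Min (supp t - {v}) < Min (supp t' - {v})"
    using exists_nodal_pair[OF assms] by blast
  have c3: "card (supp s) = 3" if "s \<in> S" for s
    using card_supp_eq_3_if_socle_weight_eq[OF _ that] weight dim by simp
  define P1 P2 R where "P1 = supp t - {v}" and "P2 = supp t' - {v}" and "R = S - {t, t'}"
  have st: "supp t = insert v P1" "supp t' = insert v P2" using tt(4) by (auto simp: P1_def P2_def)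
  have S: "S = insert t (insert t' R)" "t \<notin> R" "t' \<notin> R" using tt(1,2) by (auto simp: R_def)
  have "finite R" using finite by (simp add: R_def)
  then have "card (insert t (insert t' R)) = card R + 2" using S(2,3) tt(3) by simp
  then have "card R + 2 = n" using card_eq S(1) by simp
  moreover have "(\<Sum>r\<in>R. card (supp r)) = (\<Sum>r\<in>R. 3)"
    using c3 by (intro sum.cong) (auto simp: R_def)
  ultimately have "(\<Sum>r\<in>R. card (supp r)) = k - 5" using dim by simp
  moreover have "card (supp t \<union> supp t') = 5"
    using card_Un_Int[of "supp t" "supp t'"] c3 tt(1,2,4) by simp
  moreover have "(\<Union>s\<in>S. supp s) = (supp t \<union> supp t') \<union> (\<Union>r\<in>R. supp r)"
    by (subst S(1)) auto
  then have Uall: "(supp t \<union> supp t') \<union> (\<Union>r\<in>R. supp r) = {..<k}" using UN_supp by simp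
  then have "card ((supp t \<union> supp t') \<union> (\<Union>r\<in>R. supp r)) = k" by simp
  moreover have "card (supp t \<union> supp t') \<le> card ((supp t \<union> supp t') \<union> (\<Union>r\<in>R. supp r))"
    using \<open>finite R\<close> by (intro card_mono) auto
  moreover have "card (\<Union>r\<in>R. supp r) \<le> (\<Sum>r\<in>R. card (supp r))"
    using \<open>finite R\<close> by (rule card_UN_le)
  moreover have "finite (\<Union>r\<in>R. supp r)" using \<open>finite R\<close> by simp
  then have "card (supp t \<union> supp t') + card (\<Union>r\<in>R. supp r)
      = card ((supp t \<union> supp t') \<union> (\<Union>r\<in>R. supp r)) + card ((supp t \<union> supp t') \<inter> (\<Union>r\<in>R. supp r))"
    by (intro card_Un_Int) simp_all
  ultimately have "card ((supp t \<union> supp t') \<inter> (\<Union>r\<in>R. supp r)) = 0"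
    and UR: "card (\<Union>r\<in>R. supp r) = (\<Sum>r\<in>R. card (supp r))"
    by linarith+
  then have U12: "(supp t \<union> supp t') \<inter> (\<Union>r\<in>R. supp r) = {}"
    using \<open>finite (\<Union>r\<in>R. supp r)\<close> by simp
  have Rdisj: "supp r \<inter> supp r' = {}" if "r \<in> R" "r' \<in> R" "r \<noteq> r'" for r r'
    using card_UN_add_card_Int_le[OF \<open>finite R\<close> that, of supp] UR by simp
  have "supp ` R \<in> triple_partitions (\<Union>r\<in>R. supp r)"
    using supp_image_triple_partition[of R] c3 Rdisj by (auto simp: R_def)
  moreover have "(\<Union>r\<in>R. supp r) = {..<k} - (supp t \<union> supp t')"
    using U12 Uall by auto
  then have "(\<Union>r\<in>R. supp r) = {..<k} - insert v (P1 \<union> P2)"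
    unfolding st by simp
  moreover have "v \<in> supp t" "v \<in> supp t'" using tt(4) by auto
  then have "card P1 = 2" "card P2 = 2"
    using c3[OF tt(1)] c3[OF tt(2)] unfolding P1_def P2_def by simp_all
  moreover have "P1 \<subseteq> {..<k} - {v}" "P2 \<subseteq> {..<k} - {v} - P1"
    using supp_subset tt(1,2,4) by (auto simp: P1_def P2_def)
  moreover have "v < k" using supp_subset[OF tt(1)] st by auto
  ultimately have "(v, (P1, P2), supp ` R) \<in> nodal_socle_params k"
    using tt(5) by (simp add: nodal_socle_params_def min_ordered_pairs_def pair_subsets_def P1_def P2_def)
  moreover have "supp ` S = nodal_blocks v P1 P2 (supp ` R)"
    unfolding nodal_blocks_def st[symmetric] by (subst S(1)) simp
  moreover have "sqfree_pt k ` supp ` S = S"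
    using sqfree_pt_supp_if_card_supp_eq_3 c3 by (simp add: image_image)
  ultimately show ?thesis unfolding nodal_socle_def by (metis (no_types, lifting) case_prod_conv image_eqI)
qed

lemma two_mult_card_socle_configs_weight_Suc_k:
  "2 * card {S. socle_config k S n \<and> socle_weight S = k + 1}
     = k * (((k - 1) choose 2) * ((k - 3) choose 2)) * triple_partition_count (k - 5)"
proof -
  have "nodal_socle k ` nodal_socle_params k = {S. socle_config k S n \<and> socle_weight S = k + 1}"
    using socle_config_nodal_socle nodal_socle_surj by blast
  then show ?thesis
    using card_image[OF inj_on_nodal_socle] two_mult_card_nodal_socle_params by metis
qed

end

lemma count_weight_k_closed_form:
  assumes "3 * n = k + 1"
  shows "real (k * (k - 1) * triple_partition_count (k - 2)) = 2 * (fact (3 * n) / (6 ^ n * fact n))"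
proof -
  obtain m where m: "n = Suc m" using assms by (cases n) auto
  then have "k = 3 * m + 2" using assms by simp
  then show ?thesis
    unfolding m fact_3_ratio_Suc unfolding real_triple_partition_count[symmetric]
    by (simp add: algebra_simps)
qed

lemma count_weight_Suc_k_closed_form:
  assumes dim: "3 * n = k + 1"
    and c: "2 * c = k * (((k - 1) choose 2) * ((k - 3) choose 2)) * triple_partition_count (k - 5)"
  shows "real c = 3 * (real n - 1) / 2 * (fact (3 * n) / (6 ^ n * fact n))"
proof (cases "n = 1")
  case True
  then show ?thesis using dim c by simp
next
  case False
  then have "2 \<le> n" using dim by (cases n) auto
  then obtain m where m: "n = Suc (Suc m)" by (metis add_2_eq_Suc le_Suc_ex add.commute)
  then have k: "k = 3 * m + 5" using dim by simp
  have "4 * (2 * c) = (3 * m + 5) * (2 * ((3 * m + 4) choose 2)) * (2 * ((3 * m + 2) choose 2))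
      * triple_partition_count (3 * m)"
    unfolding c k by (simp add: add.commute)
  then have c8: "8 * c = (3 * m + 5) * (3 * m + 4) * (3 * m + 3) * (3 * m + 2) * (3 * m + 1)
      * triple_partition_count (3 * m)"
    unfolding two_mult_choose_two by (simp add: algebra_simps)
  have "real c = real (8 * c) / 8" by simp
  also have "\<dots> = 3 * (real n - 1) / 2 * (fact (3 * n) / (6 ^ n * fact n))"
    unfolding c8 m fact_3_ratio_Suc unfolding real_triple_partition_count[symmetric]
    by (simp add: field_simps)
  finally show ?thesis .
qed

theorem proposition5p2:
  fixes n :: nat
  assumes "n \<ge> 1"
  shows "(\<forall>P. is_partition (3*n-1) P \<and> hilb P 1 = 3*n-1 \<and> socle_type_0003 P n \<longrightarrow>
            plength P = 3 \<and>
            (map (hilb P) [0..<4] = [1, 3*n-1, 3*n, n] \<or>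
             map (hilb P) [0..<4] = [1, 3*n-1, 3*n-1, n]))
       \<and> real (alpha (3*n-1) (3*n) n 3)
           = 3 * (real n - 1) / 2 * (fact (3*n) / (6 ^ n * fact n))
       \<and> real (alpha (3*n-1) (3*n-1) n 3)
           = 2 * (fact (3*n) / (6 ^ n * fact n))"
proof -
  define k where "k = 3 * n - 1"
  have dim: "3 * n = k + 1" using assms by (simp add: k_def)
  have "\<forall>P. is_partition k P \<and> hilb P 1 = k \<and> socle_type_0003 P n \<longrightarrow> plength P = 3 \<and>
      (map (hilb P) [0..<4] = [1, k, k + 1, n] \<or> map (hilb P) [0..<4] = [1, k, k, n])"
    using hilb_partition_with_cubic_socle[OF dim] by blast
  moreover have "real (alpha k (k + 1) n 3) = 3 * (real n - 1) / 2 * (fact (3 * n) / (6 ^ n * fact n))"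
    using count_weight_Suc_k_closed_form[OF dim] two_mult_card_socle_configs_weight_Suc_k[OF dim]
      alpha_eq_card_socle_configs[OF dim] by metis
  moreover have "real (alpha k k n 3) = 2 * (fact (3 * n) / (6 ^ n * fact n))"
    using count_weight_k_closed_form[OF dim] card_socle_configs_weight_k[OF dim]
      alpha_eq_card_socle_configs[OF dim] by metis
  ultimately show ?thesis unfolding dim[symmetric] unfolding k_def by (intro conjI)
qed

end
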